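(* Let $n,k,h,d$ be integers with $k\ge1$ and $2\le h\le n-d\le n-k$, set $s=d+1-k$, let $F$ be a finite field with $|F|\ge sn$, let $\{\lambda_{i,j}: i\in[n],\ j\in\{0,\dots,s-1\}\}$ be $sn$ distinct elements of $F$, and let $\mathcal{C}$ be the set of all $C=(C_1,\dots,C_n)$, $C_i=(c_{i,b,a}: b\in\{1,\dots,d+h-k\},\ a\in\{0,\dots,s^n-1\})$, satisfying $\sum_{i=1}^n \lambda_{i,a_i}^t c_{i,b,a}=0$ for all $t\in\{0,\dots,n-k-1\}$, $b\in\{1,\dots,d+h-k\}$, $a\in\{0,\dots,s^n-1\}$. Let $\mathcal{R}\subseteq[n]\setminus[h]$ with $|\mathcal{R}|=d$ and let $u\in[h]$. Then for every $C\in\mathcal{C}$, the values $$\{c_{u,b,a}: a\in\{0,\dots,s^n-1\},\ b\in\{1,\dots,s-1,s+u-1\}\}\ \cup\ \Big\{\sum_{j=0}^{s-2}c_{i,j+1,a(u,a_u\oplus j)}+c_{i,s+u-1,a(u,a_u\oplus(s-1))}: a\in\{0,\dots,s^n-1\},\ i\in[h]\setminus\{u\}\Big\}$$ are uniquely determined by the values $$\Big\{\sum_{j=0}^{s-2}c_{i,j+1,a(u,a_u\oplus j)}+c_{i,s+u-1,a(u,a_u\oplus(s-1))}: a\in\{0,\dots,s^n-1\},\ i\in\mathcal{R}\Big\},$$ i.e. any two codewords of $\mathcal{C}$ agreeing on the latter values agree on the former values.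
   Context: $[n]=\{1,\dots,n\}$. For $a\in\{0,\dots,s^n-1\}$, $(a_1,\dots,a_n)\in\{0,\dots,s-1\}^n$ denotes its $n$-digit $s$-ary expansion, and $a$ is identified with this tuple. For $i\in[n]$, $v\in\{0,\dots,s-1\}$, $a(i,v)$ denotes the element obtained from $a$ by replacing the $i$th digit $a_i$ by $v$; $\oplus$ denotes addition modulo $s$. Empty sums (when $s=1$) are zero. *)

theory Defs
  imports Main
begin

text \<open>The i-th digit (i in 1..n) of the n-digit s-ary expansion of a, a_1 most significant.\<close>
definition digit :: "nat \<Rightarrow> nat \<Rightarrow> nat \<Rightarrow> nat \<Rightarrow> nat" where
  "digit s n a i = (a div s ^ (n - i)) mod s"

definition set_digit :: "nat \<Rightarrow> nat \<Rightarrow> nat \<Rightarrow> nat \<Rightarrow> nat \<Rightarrow> nat" where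
  "set_digit s n a i v = a - digit s n a i * s ^ (n - i) + v * s ^ (n - i)"

definition code :: "nat \<Rightarrow> nat \<Rightarrow> nat \<Rightarrow> nat \<Rightarrow> nat \<Rightarrow> (nat \<Rightarrow> nat \<Rightarrow> 'a::field)
    \<Rightarrow> (nat \<Rightarrow> nat \<Rightarrow> nat \<Rightarrow> 'a) set" where
  "code n k h d s lam = {c. \<forall>t<n - k. \<forall>b\<in>{1..d + h - k}. \<forall>a<s ^ n.
      (\<Sum>i=1..n. lam i (digit s n a i) ^ t * c i b a) = 0}"

definition rep :: "nat \<Rightarrow> nat \<Rightarrow> nat \<Rightarrow> (nat \<Rightarrow> nat \<Rightarrow> nat \<Rightarrow> 'a::field) \<Rightarrow> nat \<Rightarrow> nat \<Rightarrow> 'a" where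
  "rep n s u c i a =
     (\<Sum>j<s - 1. c i (j + 1) (set_digit s n a u ((digit s n a u + j) mod s)))
     + c i (s + u - 1) (set_digit s n a u ((digit s n a u + (s - 1)) mod s))"

end

theory Submission
  imports Defs "HOL-Computational_Algebra.Polynomial"
begin

text \<open>Subtracting two codewords reduces the claim to a codeword e whose repair combinations vanish
  at the nodes of R. Fix a and add up, over j < s, the parity checks of row b_j (b_j = j + 1 for
  j < s - 1 and b_(s-1) = s + u - 1) at the point a(u, a_u + j mod s). A node i \<noteq> u has the same
  evaluation point lam_(i,a_i) in all s checks, so its entries add up to its repair combination,
  while node u contributes its s entries with the s distinct points lam_(u, a_u + j mod s). This
  gives the power-sum equations sum_l x_l^t y_l = 0, t < n - k, in n - 1 + s unknowns at distinct
  points, of which the d unknowns at the nodes of R vanish by assumption; the remaining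
  n - 1 + s - d = n - k unknowns form an invertible Vandermonde system and are zero.\<close>

lemma digit_less: "0 < s \<Longrightarrow> digit s n a i < s"
  unfolding digit_def by simp

lemma place_value_decomp:
  fixes a p s :: nat
  shows "a = a div (s * p) * (s * p) + a div p mod s * p + a mod p"
proof -
  have "a = a div p * p + a mod p" by simp
  also have "a div p = a div p div s * s + a div p mod s" by simp
  also have "a div p div s = a div (s * p)" by (simp add: div_mult2_eq mult.commute)
  finally show ?thesis by (simp add: algebra_simps)
qed

lemma place_value_unique:
  fixes q v r p s :: nat
  assumes "v < s" "r < p"
  shows "(q * (s * p) + v * p + r) div (s * p) = q"
    and "(q * (s * p) + v * p + r) div p mod s = v"
    and "(q * (s * p) + v * p + r) mod p = r"
proof -
  have x: "q * (s * p) + v * p + r = (q * s + v) * p + r" by (simp add: algebra_simps)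
  have div_p: "(q * (s * p) + v * p + r) div p = q * s + v"
    unfolding x using assms by simp
  show "(q * (s * p) + v * p + r) div p mod s = v"
    unfolding div_p using assms by simp
  show "(q * (s * p) + v * p + r) div (s * p) = q"
    unfolding div_mult2_eq[of _ p s, simplified mult.commute[of p s]] div_p using assms by simp
  show "(q * (s * p) + v * p + r) mod p = r"
    unfolding x using assms by simp
qed

lemma div_mod_eq_mod_mult_div: "(x::nat) div q mod s = x mod (s * q) div q"
proof (cases "q = 0")
  case False
  then show ?thesis using mod_mult2_eq[of x q s] by (simp add: mult.commute)
qed simp

lemma div_mod_cong_mod:
  fixes x y p q s :: nat
  assumes "s * q dvd p" "x mod p = y mod p"
  shows "x div q mod s = y div q mod s"
proof -
  have "x mod (s * q) = y mod (s * q)"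
    using assms by (metis mod_mod_cancel)
  then show ?thesis by (simp add: div_mod_eq_mod_mult_div)
qed

lemma digit_decomp:
  "a = a div (s * s ^ (n - i)) * (s * s ^ (n - i)) + digit s n a i * s ^ (n - i)
    + a mod s ^ (n - i)"
  unfolding digit_def by (rule place_value_decomp)

lemma set_digit_eq:
  "set_digit s n a i v
    = a div (s * s ^ (n - i)) * (s * s ^ (n - i)) + v * s ^ (n - i) + a mod s ^ (n - i)"
proof -
  have "a - digit s n a i * s ^ (n - i)
      = a div (s * s ^ (n - i)) * (s * s ^ (n - i)) + a mod s ^ (n - i)"
    using digit_decomp[of a s n i] by linarith
  then show ?thesis unfolding set_digit_def by simp
qed

lemma set_digit_digit: "set_digit s n a i (digit s n a i) = a"
  using digit_decomp[of a s n i] unfolding set_digit_eq by simp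

lemma digit_set_digit:
  assumes "0 < s" "v < s"
  shows "digit s n (set_digit s n a i v) i = v"
  unfolding digit_def set_digit_eq using assms by (simp add: place_value_unique)

lemma set_digit_set_digit:
  assumes "0 < s" "v < s"
  shows "set_digit s n (set_digit s n a i v) i w = set_digit s n a i w"
  using assms by (simp add: set_digit_eq place_value_unique)

lemma set_digit_less:
  assumes "0 < s" "v < s" "a < s ^ n" "1 \<le> i" "i \<le> n"
  shows "set_digit s n a i v < s ^ n"
proof -
  define p where "p = s ^ (n - i)"
  have "n = (i - 1) + Suc (n - i)" using assms(4,5) by arith
  then have sn: "s ^ n = s ^ (i - 1) * (s * p)"
    unfolding p_def by (metis power_add power_Suc)
  have "a mod p < p" using assms(1) unfolding p_def by simp
  moreover have "Suc v * p \<le> s * p" using assms(2) by (intro mult_le_mono1) simp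
  ultimately have "set_digit s n a i v < (a div (s * p) + 1) * (s * p)"
    unfolding set_digit_eq p_def[symmetric] by (simp add: algebra_simps)
  also have "\<dots> \<le> s ^ (i - 1) * (s * p)"
    using assms(3) sn by (intro mult_le_mono1) (simp add: less_mult_imp_div_less Suc_leI)
  finally show ?thesis using sn by simp
qed

lemma digit_set_digit_other:
  assumes "0 < s" "v < s" "i' \<noteq> i" "i \<le> n" "i' \<le> n"
  shows "digit s n (set_digit s n a i v) i' = digit s n a i'"
proof -
  define p where "p = s ^ (n - i)"
  have a_mod: "a mod p < p" using assms(1) unfolding p_def by simp
  show ?thesis
  proof (cases "i' < i")
    case True
    have "n - i' = Suc (n - i) + (i - i' - 1)" using True assms(4) by arith
    then have "s ^ (n - i') = s * p * s ^ (i - i' - 1)"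
      unfolding p_def by (metis power_add power_Suc)
    moreover have "set_digit s n a i v div (s * p) = a div (s * p)"
      unfolding set_digit_eq p_def[symmetric] using assms(2) a_mod by (rule place_value_unique)
    ultimately show ?thesis unfolding digit_def by (simp add: div_mult2_eq)
  next
    case False
    then have "i < i'" using assms(3) by simp
    then have "s * s ^ (n - i') dvd p"
      unfolding p_def using assms(5) by (simp add: le_imp_power_dvd flip: power_Suc)
    moreover have "set_digit s n a i v mod p = a mod p"
      unfolding set_digit_eq p_def[symmetric] using assms(2) a_mod by (rule place_value_unique)
    ultimately show ?thesis unfolding digit_def by (rule div_mod_cong_mod)
  qed
qed

lemma mod_add_left_inj:
  fixes x j j' s :: nat
  assumes "j < s" "j' < s" "(x + j) mod s = (x + j') mod s"
  shows "j = j'"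
proof -
  define x' where "x' = x mod s"
  have x': "x' < s" using assms(1) unfolding x'_def by simp
  have wrap: "(x' + i) mod s = (if x' + i < s then x' + i else x' + i - s)" if "i < s" for i
    using x' that by (simp add: mod_if le_mod_geq)
  have "(x' + j) mod s = (x' + j') mod s"
    using assms(3) unfolding x'_def by (simp add: mod_add_left_eq)
  then show ?thesis
    unfolding wrap[OF assms(1)] wrap[OF assms(2)] using assms(1,2) by (simp split: if_splits)
qed

definition rotate_digit :: "nat \<Rightarrow> nat \<Rightarrow> nat \<Rightarrow> nat \<Rightarrow> nat \<Rightarrow> nat" where
  "rotate_digit s n u a j = set_digit s n a u ((digit s n a u + j) mod s)"

definition repair_row :: "nat \<Rightarrow> nat \<Rightarrow> nat \<Rightarrow> nat" where
  "repair_row s u j = (if j < s - 1 then j + 1 else s + u - 1)"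

lemma rotate_digit_less:
  "0 < s \<Longrightarrow> a < s ^ n \<Longrightarrow> u \<in> {1..n} \<Longrightarrow> rotate_digit s n u a j < s ^ n"
  unfolding rotate_digit_def by (simp add: set_digit_less)

lemma digit_rotate_digit_same:
  "0 < s \<Longrightarrow> digit s n (rotate_digit s n u a j) u = (digit s n a u + j) mod s"
  unfolding rotate_digit_def by (simp add: digit_set_digit)

lemma digit_rotate_digit_other:
  "0 < s \<Longrightarrow> i \<noteq> u \<Longrightarrow> i \<le> n \<Longrightarrow> u \<le> n \<Longrightarrow>
    digit s n (rotate_digit s n u a j) i = digit s n a i"
  unfolding rotate_digit_def by (simp add: digit_set_digit_other)

lemma rotate_digit_rotate_digit:
  "0 < s \<Longrightarrow> rotate_digit s n u (rotate_digit s n u a j) j' = rotate_digit s n u a (j + j')"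
  unfolding rotate_digit_def
  by (simp add: set_digit_set_digit digit_set_digit mod_add_left_eq add.assoc)

lemma rotate_digit_self: "rotate_digit s n u a s = a"
proof -
  have "(digit s n a u + s) mod s = digit s n a u" by (simp add: digit_def)
  then show ?thesis unfolding rotate_digit_def by (simp add: set_digit_digit)
qed

lemma repair_row_image:
  assumes "0 < s"
  shows "repair_row s u ` {..<s} = {1..s - 1} \<union> {s + u - 1}"
proof
  show "repair_row s u ` {..<s} \<subseteq> {1..s - 1} \<union> {s + u - 1}"
    unfolding repair_row_def by auto
  show "{1..s - 1} \<union> {s + u - 1} \<subseteq> repair_row s u ` {..<s}"
  proof
    fix b assume "b \<in> {1..s - 1} \<union> {s + u - 1}"
    then show "b \<in> repair_row s u ` {..<s}"
      using assms by (intro image_eqI[where x = "if b < s then b - 1 else s - 1"])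
        (auto simp: repair_row_def)
  qed
qed

lemma rep_eq_sum_rotations:
  assumes "0 < s"
  shows "rep n s u c i a = (\<Sum>j<s. c i (repair_row s u j) (rotate_digit s n u a j))"
proof -
  have "{..<s} = insert (s - 1) {..<s - 1}" using assms by auto
  then show ?thesis
    unfolding rep_def rotate_digit_def repair_row_def by (simp add: add.commute)
qed

lemma sum_over_rotations:
  fixes f :: "nat \<Rightarrow> nat \<Rightarrow> 'a::field"
  assumes "0 < s" "u \<in> {1..n}"
  shows "(\<Sum>j<s. \<Sum>i=1..n. f i (digit s n (rotate_digit s n u a j) i)
            * c i (repair_row s u j) (rotate_digit s n u a j))
    = (\<Sum>i\<in>{1..n} - {u}. f i (digit s n a i) * rep n s u c i a)
      + (\<Sum>j<s. f u ((digit s n a u + j) mod s)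
           * c u (repair_row s u j) (rotate_digit s n u a j))"
proof -
  have split_u: "(\<Sum>i=1..n. f i (digit s n (rotate_digit s n u a j) i)
            * c i (repair_row s u j) (rotate_digit s n u a j))
    = f u ((digit s n a u + j) mod s) * c u (repair_row s u j) (rotate_digit s n u a j)
      + (\<Sum>i\<in>{1..n} - {u}. f i (digit s n a i)
           * c i (repair_row s u j) (rotate_digit s n u a j))"
    for j
    using assms by (subst sum.remove[of "{1..n}" u])
      (auto simp: digit_rotate_digit_same digit_rotate_digit_other intro!: sum.cong)
  have "(\<Sum>j<s. \<Sum>i\<in>{1..n} - {u}. f i (digit s n a i)
            * c i (repair_row s u j) (rotate_digit s n u a j))
      = (\<Sum>i\<in>{1..n} - {u}. f i (digit s n a i) * rep n s u c i a)"
    unfolding rep_eq_sum_rotations[OF assms(1)] sum_distrib_left by (rule sum.swap)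
  then show ?thesis unfolding split_u sum.distrib by (simp add: add.commute)
qed

lemma power_sums_vanish_imp_zero:
  fixes x y :: "'b \<Rightarrow> 'a::field"
  assumes fin: "finite S" and inj: "inj_on x S" and card: "card S \<le> N"
    and sums: "\<And>t. t < N \<Longrightarrow> (\<Sum>l\<in>S. x l ^ t * y l) = 0"
    and l0: "l0 \<in> S"
  shows "y l0 = 0"
proof -
  \<comment> \<open>p vanishes at every node except x l0, and its degree is small enough for
    sum_l p(x l) * y l to be a combination of the vanishing power sums.\<close>
  define p where "p = (\<Prod>l\<in>S - {l0}. [:- x l, 1:])"
  have "degree p \<le> sum (degree \<circ> (\<lambda>l. [:- x l, 1:])) (S - {l0})"
    unfolding p_def using fin by (intro degree_prod_sum_le) simp
  also have "\<dots> = card (S - {l0})" by simp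
  also have "\<dots> < N" using card l0 fin by (metis card_Diff1_less order.strict_trans2)
  finally have deg: "degree p < N" .
  have vanish: "poly p (x l) = 0" if "l \<in> S - {l0}" for l
    unfolding p_def poly_prod using that fin by (intro prod_zero) (auto intro!: bexI[of _ l])
  have "(\<Sum>l\<in>S - {l0}. poly p (x l) * y l) = 0"
    using vanish by (intro sum.neutral) simp
  then have "poly p (x l0) * y l0 = (\<Sum>l\<in>S. poly p (x l) * y l)"
    using sum.remove[OF fin l0, of "\<lambda>l. poly p (x l) * y l"] by simp
  also have "\<dots> = (\<Sum>l\<in>S. \<Sum>i\<le>degree p. coeff p i * (x l ^ i * y l))"
    by (simp add: poly_altdef sum_distrib_right mult.assoc)
  also have "\<dots> = (\<Sum>i\<le>degree p. coeff p i * (\<Sum>l\<in>S. x l ^ i * y l))"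
    by (subst sum.swap) (simp add: sum_distrib_left)
  also have "\<dots> = 0" using deg sums by simp
  finally have "poly p (x l0) * y l0 = 0" .
  moreover have "poly p (x l0) \<noteq> 0"
    unfolding p_def poly_prod using fin inj l0 by (auto simp: inj_on_def)
  ultimately show ?thesis by simp
qed

lemma rotated_checks_power_sums:
  fixes lam :: "nat \<Rightarrow> nat \<Rightarrow> 'a::field" and e :: "nat \<Rightarrow> nat \<Rightarrow> nat \<Rightarrow> 'a"
  assumes s: "0 < s" and u: "u \<in> {1..n}" and R: "R \<subseteq> {1..n} - {u}"
    and checks: "\<And>j. j < s \<Longrightarrow>
      (\<Sum>i=1..n. lam i (digit s n (rotate_digit s n u a j) i) ^ t
         * e i (repair_row s u j) (rotate_digit s n u a j)) = 0"
    and R_zero: "\<And>i. i \<in> R \<Longrightarrow> rep n s u e i a = 0"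
  shows "(\<Sum>i\<in>{1..n} - {u} - R. lam i (digit s n a i) ^ t * rep n s u e i a)
       + (\<Sum>j<s. lam u ((digit s n a u + j) mod s) ^ t
            * e u (repair_row s u j) (rotate_digit s n u a j)) = 0"
proof -
  have "(\<Sum>i\<in>{1..n} - {u} - R. lam i (digit s n a i) ^ t * rep n s u e i a)
      = (\<Sum>i\<in>{1..n} - {u}. lam i (digit s n a i) ^ t * rep n s u e i a)"
    using R R_zero by (intro sum.mono_neutral_left) auto
  moreover have "(\<Sum>i\<in>{1..n} - {u}. lam i (digit s n a i) ^ t * rep n s u e i a)
      + (\<Sum>j<s. lam u ((digit s n a u + j) mod s) ^ t
           * e u (repair_row s u j) (rotate_digit s n u a j))
      = (\<Sum>j<s. \<Sum>i=1..n. lam i (digit s n (rotate_digit s n u a j) i) ^ t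
           * e i (repair_row s u j) (rotate_digit s n u a j))"
    using sum_over_rotations[OF s u, of "\<lambda>i v. lam i v ^ t"] by simp
  moreover have "(\<Sum>j<s. \<Sum>i=1..n. lam i (digit s n (rotate_digit s n u a j) i) ^ t
      * e i (repair_row s u j) (rotate_digit s n u a j)) = 0"
    using checks by simp
  ultimately show ?thesis by simp
qed

lemma repair_values_zero:
  fixes lam :: "nat \<Rightarrow> nat \<Rightarrow> 'a::field" and e :: "nat \<Rightarrow> nat \<Rightarrow> nat \<Rightarrow> 'a"
  assumes s: "0 < s" and u: "u \<in> {1..n}"
    and inj: "inj_on (\<lambda>(i, v). lam i v) ({1..n} \<times> {0..<s})"
    and R: "R \<subseteq> {1..n} - {u}" and count: "n - 1 + s \<le> N + card R"
    and checks: "\<And>t j. t < N \<Longrightarrow> j < s \<Longrightarrow>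
      (\<Sum>i=1..n. lam i (digit s n (rotate_digit s n u a j) i) ^ t
         * e i (repair_row s u j) (rotate_digit s n u a j)) = 0"
    and R_zero: "\<And>i. i \<in> R \<Longrightarrow> rep n s u e i a = 0"
  shows "\<And>j. j < s \<Longrightarrow> e u (repair_row s u j) (rotate_digit s n u a j) = 0"
    and "\<And>i. i \<in> {1..n} - {u} - R \<Longrightarrow> rep n s u e i a = 0"
proof -
  define S where "S = ({1..n} - {u} - R) <+> {..<s}"
  define node :: "nat + nat \<Rightarrow> nat \<times> nat" where
    "node l = (case l of Inl i \<Rightarrow> (i, digit s n a i) | Inr j \<Rightarrow> (u, (digit s n a u + j) mod s))"
    for l
  define y where
    "y l = (case l of Inl i \<Rightarrow> rep n s u e i a
                    | Inr j \<Rightarrow> e u (repair_row s u j) (rotate_digit s n u a j))" for l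
  have fin: "finite S" unfolding S_def by simp
  have inj_node: "inj_on node S"
    unfolding S_def node_def by (rule inj_onI) (auto dest: mod_add_left_inj)
  have node_range: "node ` S \<subseteq> {1..n} \<times> {0..<s}"
    using u s unfolding node_def S_def by (auto simp: digit_less)
  have inj_S: "inj_on (\<lambda>l. (\<lambda>(i, v). lam i v) (node l)) S"
    using comp_inj_on[OF inj_node inj_on_subset[OF inj node_range]] by (simp add: comp_def)
  have "card R \<le> n - 1" using card_mono[OF _ R] u by simp
  moreover have "card ({1..n} - {u} - R) = n - 1 - card R"
    using R u by (simp add: card_Diff_subset finite_subset)
  ultimately have card_S: "card S \<le> N" using count unfolding S_def by (simp add: card_Plus)
  have "(\<Sum>l\<in>S. (\<lambda>(i, v). lam i v) (node l) ^ t * y l) = 0" if "t < N" for t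
    using rotated_checks_power_sums[OF s u R checks[OF that] R_zero]
    unfolding S_def by (simp add: sum.Plus node_def y_def)
  then have y_zero: "y l = 0" if "l \<in> S" for l
    using power_sums_vanish_imp_zero[OF fin inj_S card_S _ that] by simp
  show "e u (repair_row s u j) (rotate_digit s n u a j) = 0" if "j < s" for j
    using y_zero[of "Inr j"] that unfolding S_def y_def by auto
  show "rep n s u e i a = 0" if "i \<in> {1..n} - {u} - R" for i
    using y_zero[of "Inl i"] InlI[OF that, of "{..<s}"] unfolding S_def y_def by simp
qed

lemma code_diff:
  "c \<in> code n k h d s lam \<Longrightarrow> c' \<in> code n k h d s lam \<Longrightarrow>
    (\<lambda>i b a. c i b a - c' i b a) \<in> code n k h d s lam"
  unfolding code_def by (simp add: right_diff_distrib sum_subtractf)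

lemma rep_diff:
  "rep n s u (\<lambda>i b a. c i b a - c' i b a) i a = rep n s u c i a - rep n s u c' i a"
  unfolding rep_def by (simp add: sum_subtractf)

lemma code_checks_at_rotations:
  assumes e: "e \<in> code n k h d s lam"
    and "k \<le> d" "s = d + 1 - k" "u \<in> {1..h}" "h \<le> n"
    and "a < s ^ n" "t < n - k" "j < s"
  shows "(\<Sum>i=1..n. lam i (digit s n (rotate_digit s n u a j) i) ^ t
           * e i (repair_row s u j) (rotate_digit s n u a j)) = 0"
proof -
  have "repair_row s u j \<in> repair_row s u ` {..<s}" using assms(8) by simp
  then have "repair_row s u j \<in> {1..s - 1} \<union> {s + u - 1}"
    using repair_row_image[of s u] assms(8) by simp
  then have "repair_row s u j \<in> {1..d + h - k}" using assms(2-4) by auto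
  moreover have "rotate_digit s n u a j < s ^ n"
    using assms(3-6,8) by (intro rotate_digit_less) auto
  ultimately show ?thesis using e assms(7) unfolding code_def by blast
qed

lemma code_repair_zero:
  fixes lam :: "nat \<Rightarrow> nat \<Rightarrow> 'a::field"
  assumes "1 \<le> k" "k \<le> d" and s: "s = d + 1 - k" and "h + d \<le> n" and u: "u \<in> {1..h}"
    and inj: "inj_on (\<lambda>(i, v). lam i v) ({1..n} \<times> {0..<s})"
    and R: "R \<subseteq> {1..n} - {1..h}" "card R = d"
    and e: "e \<in> code n k h d s lam"
    and R_zero: "\<And>a i. a < s ^ n \<Longrightarrow> i \<in> R \<Longrightarrow> rep n s u e i a = 0"
  shows "\<And>a b. a < s ^ n \<Longrightarrow> b \<in> {1..s - 1} \<union> {s + u - 1} \<Longrightarrow> e u b a = 0"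
    and "\<And>a i. a < s ^ n \<Longrightarrow> i \<in> {1..h} - {u} \<Longrightarrow> rep n s u e i a = 0"
proof -
  have s_pos: "0 < s" and u_n: "u \<in> {1..n}" and h_n: "h \<le> n" using assms(2-5) by auto
  have R_u: "R \<subseteq> {1..n} - {u}" using R(1) u by auto
  have count: "n - 1 + s \<le> (n - k) + card R" using assms(1-4) R(2) by linarith
  note vanish = repair_values_zero[OF s_pos u_n inj R_u count
      code_checks_at_rotations[OF e assms(2,3) u h_n] R_zero]
  show "rep n s u e i a = 0" if "a < s ^ n" "i \<in> {1..h} - {u}" for a i
  proof -
    have "i \<in> {1..n} - {u} - R" using that(2) R(1) assms(4) by auto
    then show ?thesis using vanish(2) that(1) by blast
  qed
  show "e u b a = 0" if a: "a < s ^ n" and b: "b \<in> {1..s - 1} \<union> {s + u - 1}" for a b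
  proof -
    obtain j where j: "j < s" "repair_row s u j = b"
      using b repair_row_image[OF s_pos, of u] by (metis imageE lessThan_iff)
    define a' where "a' = rotate_digit s n u a (s - j)"
    have "rotate_digit s n u a' j = a"
      unfolding a'_def using s_pos j(1) by (simp add: rotate_digit_rotate_digit rotate_digit_self)
    moreover have "a' < s ^ n" unfolding a'_def using s_pos a u_n by (rule rotate_digit_less)
    ultimately show ?thesis using vanish(1)[of a' j] j by simp
  qed
qed

theorem mainTheorem5:
  fixes n k h d s :: nat and lam :: "nat \<Rightarrow> nat \<Rightarrow> 'a::{finite,field}"
    and R :: "nat set" and u :: nat
  assumes "k \<ge> 1" and "2 \<le> h" and "h + d \<le> n" and "k \<le> d"
    and "s = d + 1 - k"
    and "card (UNIV :: 'a set) \<ge> s * n"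
    and "inj_on (\<lambda>(i, j). lam i j) ({1..n} \<times> {0..<s})"
    and "R \<subseteq> {1..n} - {1..h}" and "card R = d"
    and "u \<in> {1..h}"
  shows "\<forall>c\<in>code n k h d s lam. \<forall>c'\<in>code n k h d s lam.
     (\<forall>a<s ^ n. \<forall>i\<in>R. rep n s u c i a = rep n s u c' i a) \<longrightarrow>
     ((\<forall>a<s ^ n. \<forall>b\<in>{1..s - 1} \<union> {s + u - 1}. c u b a = c' u b a) \<and>
      (\<forall>a<s ^ n. \<forall>i\<in>{1..h} - {u}. rep n s u c i a = rep n s u c' i a))"
proof (intro ballI impI)
  fix c c' assume c: "c \<in> code n k h d s lam" and c': "c' \<in> code n k h d s lam"
    and agree: "\<forall>a<s ^ n. \<forall>i\<in>R. rep n s u c i a = rep n s u c' i a"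
  define e where "e = (\<lambda>i b a. c i b a - c' i b a)"
  have e: "e \<in> code n k h d s lam" unfolding e_def using c c' by (rule code_diff)
  have R_zero: "rep n s u e i a = 0" if "a < s ^ n" "i \<in> R" for a i
    using agree that unfolding e_def rep_diff by simp
  note zero = code_repair_zero[OF assms(1,4,5,3,10,7-9) e R_zero]
  show "(\<forall>a<s ^ n. \<forall>b\<in>{1..s - 1} \<union> {s + u - 1}. c u b a = c' u b a) \<and>
      (\<forall>a<s ^ n. \<forall>i\<in>{1..h} - {u}. rep n s u c i a = rep n s u c' i a)"
    using zero unfolding e_def rep_diff by simp
qed

end
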